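(* Let $X,Y$ be separable Banach spaces, $S:X\to X$ and $T:Y\to Y$ bounded invertible linear operators, and $\Pi:X\to Y$ a bounded linear surjection with $\Pi\circ S=T\circ\Pi$. Then: (1) if $S$ has the shadowing property, then $T$ has the shadowing property. If moreover $\Pi$ admits a strong bounded selector, then: (2) if $S$ is expansive, then $T$ is expansive; (3) if $S$ is uniformly expansive, then $T$ is uniformly expansive.
   Context: $\Pi$ admits a strong bounded selector if there is $L\ge1$ such that for every $y\in Y$ there exists $x\in\Pi^{-1}(y)$ with $\|S^n x\|\le L\|T^n y\|$ and $\|T^n y\|\le L\|S^nx\|$ for all $n\in\mathbb Z$. An invertible operator $T$ is expansive if for each $x$ with $\|x\|=1$ there is $n\in\mathbb Z$ with $\|T^nx\|\ge2$; uniformly expansive if there is $n\in\mathbb N$ such that every $z$ with $\|z\|=1$ satisfies $\|T^nz\|\ge2$ or $\|T^{-n}z\|\ge2$; it has the shadowing property if there is $K>0$ such that for every bounded sequence $(z_n)_{n\in\mathbb Z}$ there is a sequence $(y_n)_{n\in\mathbb Z}$ with $\sup_n\|y_n\|\le K\sup_n\|z_n\|$ and $y_{n+1}=Ty_n+z_n$ for all $n\in\mathbb Z$. *)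

theory Defs
  imports "HOL-Analysis.Analysis"
begin

definition ipow :: "('a \<Rightarrow> 'a) \<Rightarrow> int \<Rightarrow> 'a \<Rightarrow> 'a" where
  "ipow T n = (if n \<ge> 0 then T ^^ nat n else (inv T) ^^ nat (- n))"

definition strong_bounded_selector ::
  "('a::real_normed_vector \<Rightarrow> 'b::real_normed_vector) \<Rightarrow> ('a \<Rightarrow> 'a) \<Rightarrow> ('b \<Rightarrow> 'b) \<Rightarrow> bool" where
  "strong_bounded_selector P S T \<longleftrightarrow>
     (\<exists>L\<ge>1. \<forall>y. \<exists>x. P x = y \<and>
        (\<forall>n::int. norm (ipow S n x) \<le> L * norm (ipow T n y) \<and>
                  norm (ipow T n y) \<le> L * norm (ipow S n x)))"

definition expansive :: "('a::real_normed_vector \<Rightarrow> 'a) \<Rightarrow> bool" where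
  "expansive T \<longleftrightarrow> (\<forall>x. norm x = 1 \<longrightarrow> (\<exists>n::int. norm (ipow T n x) \<ge> 2))"

definition uniformly_expansive :: "('a::real_normed_vector \<Rightarrow> 'a) \<Rightarrow> bool" where
  "uniformly_expansive T \<longleftrightarrow> (\<exists>n::nat. n \<ge> 1 \<and> (\<forall>z. norm z = 1 \<longrightarrow>
      norm (ipow T (int n) z) \<ge> 2 \<or> norm (ipow T (- int n) z) \<ge> 2))"

definition shadowing :: "('a::real_normed_vector \<Rightarrow> 'a) \<Rightarrow> bool" where
  "shadowing T \<longleftrightarrow> (\<exists>K>0. \<forall>z::int \<Rightarrow> 'a. bounded (range z) \<longrightarrow>
      (\<exists>y::int \<Rightarrow> 'a. (\<forall>n. norm (y n) \<le> K * (SUP m. norm (z m))) \<and>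
                      (\<forall>n. y (n + 1) = T (y n) + z n)))"

end

theory Submission
  imports Defs
begin

text \<open>
  (1) By the open mapping theorem, every \<open>y\<close> has a preimage under \<open>\<Pi>\<close> of norm at most
  \<open>C \<parallel>y\<parallel>\<close>. A bounded sequence \<open>z\<close> in \<open>Y\<close> therefore lifts to a bounded sequence \<open>w\<close> in \<open>X\<close>;
  \<open>\<Pi>\<close> maps an \<open>S\<close>-orbit shadowing \<open>w\<close> to a \<open>T\<close>-orbit shadowing \<open>z\<close>, since \<open>\<Pi> S = T \<Pi>\<close>.

  (2), (3) By homogeneity, expansivity says that every vector is doubled in norm by some power
  of \<open>S\<close>, and iterating yields growth by any factor \<open>2^k\<close>. In the uniform case the growth
  happens along the single direction \<open>S^(nj)\<close> or \<open>S^(-nj)\<close>: once \<open>S^n\<close> doubles a vector,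
  \<open>S^(-n)\<close> cannot double its image, so \<open>S^n\<close> doubles that as well. A strong bounded selector
  with constant \<open>L\<close> turns growth of the selected \<open>x\<close> by a factor \<open>2L\<^sup>2\<close> into doubling
  of \<open>y\<close>.
\<close>

lemma ipow_0 [simp]: "ipow S 0 = id"
  by (simp add: ipow_def)

lemma ipow_of_nat: "ipow S (int m) = S ^^ m"
  by (simp add: ipow_def)

lemma ipow_neg_of_nat: "ipow S (- int m) = inv S ^^ m"
  by (cases "m = 0") (simp_all add: ipow_def)

lemma ipow_plus1:
  assumes "bij S"
  shows "ipow S (n + 1) x = S (ipow S n x)"
proof (cases n rule: int_cases)
  case (nonneg m)
  then show ?thesis
    using ipow_of_nat[of S "Suc m"] ipow_of_nat[of S m] by (simp add: add.commute)
next
  case (neg m)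
  then have "n + 1 = - int m" by simp
  then show ?thesis
    using neg ipow_neg_of_nat[of S "Suc m"] ipow_neg_of_nat[of S m] assms
    by (simp add: bij_is_surj surj_f_inv_f)
qed

lemma ipow_minus1:
  assumes "bij S"
  shows "ipow S (n - 1) x = inv S (ipow S n x)"
  using ipow_plus1[OF assms, of "n - 1" x] assms by (simp add: bij_is_inj)

lemma ipow_add:
  assumes "bij S"
  shows "ipow S (a + b) x = ipow S a (ipow S b x)"
proof (induction a rule: int_induct[where k = 0])
  case base
  then show ?case by simp
next
  case (step1 i)
  have "ipow S (i + 1 + b) x = ipow S ((i + b) + 1) x" by (simp add: algebra_simps)
  with step1 show ?case by (simp add: ipow_plus1[OF assms])
next
  case (step2 i)
  have "ipow S (i - 1 + b) x = ipow S ((i + b) - 1) x" by (simp add: algebra_simps)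
  with step2 show ?case by (simp add: ipow_minus1[OF assms])
qed

lemma linear_funpow:
  fixes f :: "'a::real_vector \<Rightarrow> 'a"
  shows "linear f \<Longrightarrow> linear (f ^^ n)"
  by (induction n) (simp_all add: linear_id linear_compose)

lemma linear_inv:
  assumes "bij f" "linear f"
  shows "linear (inv f)"
proof (rule linearI)
  have f_inv: "f (inv f x) = x" for x
    using assms(1) by (simp add: bij_is_surj surj_f_inv_f)
  have inv_f: "inv f (f x) = x" for x
    using assms(1) by (simp add: bij_is_inj)
  show "inv f (x + y) = inv f x + inv f y" for x y
    using inv_f[of "inv f x + inv f y"] by (simp add: linear_add[OF assms(2)] f_inv)
  show "inv f (c *\<^sub>R x) = c *\<^sub>R inv f x" for c x
    using inv_f[of "c *\<^sub>R inv f x"] by (simp add: linear_scale[OF assms(2)] f_inv)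
qed

lemma linear_ipow:
  assumes "bij S" "linear S"
  shows "linear (ipow S n)"
  using assms by (simp add: ipow_def linear_funpow linear_inv)

lemma le_norm_linear_sgn_iff:
  fixes f :: "'a::real_normed_vector \<Rightarrow> 'b::real_normed_vector"
  assumes "linear f" "x \<noteq> 0"
  shows "c \<le> norm (f (sgn x)) \<longleftrightarrow> c * norm x \<le> norm (f x)"
proof -
  have "norm (f (sgn x)) = norm (f x) / norm x"
    using assms by (simp add: sgn_div_norm linear_scale divide_inverse_commute)
  then show ?thesis using assms(2) by (simp add: le_divide_eq)
qed

lemma surj_closure_image_ball_contains_ball:
  fixes P :: "'a::real_normed_vector \<Rightarrow> 'b::banach"
  assumes "surj P"
  obtains k :: nat and y0 r where "r > 0" "ball y0 r \<subseteq> closure (P ` ball 0 (real k))"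
proof -
  let ?F = "range (\<lambda>k::nat. closure (P ` ball 0 (real k)))"
  have "\<Union>?F = UNIV"
  proof (intro set_eqI iffI UNIV_I)
    fix y
    obtain x where x: "y = P x" using assms by (rule surjE)
    obtain k :: nat where "norm x < real k" using reals_Archimedean2 by blast
    then have "y \<in> closure (P ` ball 0 (real k))" using x closure_subset by fastforce
    then show "y \<in> \<Union>?F" by blast
  qed
  have "\<exists>U\<in>?F. interior U \<noteq> {}"
  proof (rule ccontr)
    assume "\<not> (\<exists>U\<in>?F. interior U \<noteq> {})"
    then have "euclidean interior_of \<Union>?F = {}"
      by (intro Baire_category_alt) (auto simp: completely_metrizable_space_euclidean)
    with \<open>\<Union>?F = UNIV\<close> show False by simp
  qed
  then obtain k y0 where "y0 \<in> interior (closure (P ` ball 0 (real k)))" by blast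
  then obtain r where "r > 0" "ball y0 r \<subseteq> closure (P ` ball 0 (real k))"
    by (auto simp: mem_interior)
  then show ?thesis by (rule that)
qed

lemma surj_linear_approximate_lift:
  fixes P :: "'a::real_normed_vector \<Rightarrow> 'b::banach"
  assumes "linear P" "surj P"
  obtains M where "M \<ge> 0" "\<And>y. \<exists>x. norm x \<le> M * norm y \<and> norm (y - P x) \<le> norm y / 2"
proof -
  obtain k :: nat and y0 r where r: "r > 0" and B: "ball y0 r \<subseteq> closure (P ` ball 0 (real k))"
    by (rule surj_closure_image_ball_contains_ball[OF assms(2)])
  have small: "\<exists>x. norm x < 2 * real k \<and> norm (v - P x) < e" if "norm v < r" "e > 0" for v e
  proof -
    have "y0 + v \<in> closure (P ` ball 0 (real k))" "y0 \<in> closure (P ` ball 0 (real k))"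
      using B r that(1) by (auto simp: dist_norm)
    then obtain a b where a: "norm a < real k" "norm (y0 + v - P a) < e / 2"
      and b: "norm b < real k" "norm (y0 - P b) < e / 2"
      using \<open>e > 0\<close> unfolding closure_approachable
      by (auto simp: dist_norm norm_minus_commute dest!: spec[of _ "e / 2"])
    have "v - P (a - b) = (y0 + v - P a) - (y0 - P b)"
      by (simp add: linear_diff[OF assms(1)] algebra_simps)
    then have "norm (v - P (a - b)) \<le> norm (y0 + v - P a) + norm (y0 - P b)"
      by (simp only: norm_triangle_ineq4)
    moreover have "norm (a - b) \<le> norm a + norm b" by (rule norm_triangle_ineq4)
    ultimately show ?thesis using a b by (intro exI[of _ "a - b"]) simp
  qed
  have "\<exists>x. norm x \<le> (4 * real k / r) * norm y \<and> norm (y - P x) \<le> norm y / 2" for y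
  proof (cases "y = 0")
    case True
    then show ?thesis by (intro exI[of _ 0]) (simp add: linear_0[OF assms(1)])
  next
    case False
    \<comment> \<open>Rescale \<open>y\<close> into the ball of radius \<open>r\<close>, approximate there within \<open>r/4\<close>, and scale back.\<close>
    define c where "c = r / (2 * norm y)"
    have c: "c > 0" "norm (c *\<^sub>R y) < r" using False r by (simp_all add: c_def)
    then obtain x where x: "norm x < 2 * real k" "norm (c *\<^sub>R y - P x) < r / 4"
      using small[of "c *\<^sub>R y" "r / 4"] r by auto
    have "y - P (x /\<^sub>R c) = (c *\<^sub>R y - P x) /\<^sub>R c"
      using c by (simp add: linear_scale[OF assms(1)] algebra_simps)
    then have "norm (y - P (x /\<^sub>R c)) = norm (c *\<^sub>R y - P x) / c"
      using c by (simp add: divide_inverse_commute)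
    also have "\<dots> \<le> (r / 4) / c"
      using x(2) c by (intro divide_right_mono) auto
    also have "\<dots> = norm y / 2"
      using False r by (simp add: c_def field_simps)
    finally have "norm (y - P (x /\<^sub>R c)) \<le> norm y / 2" .
    moreover have "norm (x /\<^sub>R c) \<le> 2 * real k / c"
      using x(1) c by (simp add: field_simps)
    moreover have "2 * real k / c = (4 * real k / r) * norm y"
      using False r by (simp add: c_def field_simps)
    ultimately show ?thesis by (intro exI[of _ "x /\<^sub>R c"]) simp
  qed
  moreover have "4 * real k / r \<ge> 0" using r by simp
  ultimately show ?thesis using that by blast
qed

lemma approximate_lift_imp_lift:
  fixes P :: "'a::banach \<Rightarrow> 'b::real_normed_vector"
  assumes P: "bounded_linear P" and "M \<ge> 0"
    and f_bound: "\<And>y. norm (f y) \<le> M * norm y"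
    and f_approx: "\<And>y. norm (y - P (f y)) \<le> norm y / 2"
  shows "\<exists>x. P x = y \<and> norm x \<le> 2 * M * norm y"
proof -
  \<comment> \<open>Correct the residual \<open>r n\<close> again and again; the corrections \<open>f (r n)\<close> form a
      geometrically convergent series whose sum is mapped onto \<open>y\<close>.\<close>
  define r where "r n = ((\<lambda>v. v - P (f v)) ^^ n) y" for n
  define xs where "xs n = f (r n)" for n
  have r_Suc: "r (Suc n) = r n - P (xs n)" for n by (simp add: r_def xs_def)
  have r_bound: "norm (r n) \<le> norm y * (1/2) ^ n" for n
  proof (induction n)
    case (Suc n)
    have "norm (r (Suc n)) \<le> norm (r n) / 2" using f_approx by (simp add: r_Suc xs_def)
    with Suc.IH show ?case by simp
  qed (simp add: r_def)
  have xs_bound: "norm (xs n) \<le> M * norm y * (1/2) ^ n" for n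
    using f_bound[of "r n"] mult_left_mono[OF r_bound[of n] \<open>M \<ge> 0\<close>]
    by (simp add: xs_def mult.assoc)
  have geom: "summable (\<lambda>n. M * norm y * (1/2::real) ^ n)"
    by (intro summable_mult summable_geometric) simp
  have norm_summable: "summable (\<lambda>n. norm (xs n))"
    by (rule summable_comparison_test'[OF geom]) (use xs_bound in auto)
  have "r \<longlonglongrightarrow> 0"
  proof (rule tendsto_norm_zero_cancel, rule Lim_null_comparison)
    show "\<forall>\<^sub>F n in sequentially. norm (norm (r n)) \<le> norm y * (1/2) ^ n"
      using r_bound by simp
    show "(\<lambda>n. norm y * (1/2::real) ^ n) \<longlonglongrightarrow> 0"
      by (intro tendsto_mult_right_zero LIMSEQ_power_zero) simp
  qed
  moreover have partial_sums: "(\<Sum>i<n. P (xs i)) = y - r n" for n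
    by (induction n) (simp_all add: r_def[of 0] r_Suc)
  ultimately have "(\<lambda>n. P (xs n)) sums y"
    unfolding sums_def partial_sums using tendsto_diff[OF tendsto_const[of y]] by fastforce
  moreover have "(\<lambda>n. P (xs n)) sums P (suminf xs)"
    using bounded_linear.sums[OF P summable_sums[OF summable_norm_cancel[OF norm_summable]]] .
  ultimately have "P (suminf xs) = y" using sums_unique2 by blast
  moreover have "norm (suminf xs) \<le> 2 * M * norm y"
  proof -
    have "norm (suminf xs) \<le> (\<Sum>n. norm (xs n))" by (rule summable_norm[OF norm_summable])
    also have "\<dots> \<le> (\<Sum>n. M * norm y * (1/2::real) ^ n)"
      by (rule suminf_le[OF xs_bound norm_summable geom])
    also have "\<dots> = M * norm y * (\<Sum>n. (1/2::real) ^ n)"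
      by (rule suminf_mult) (simp add: summable_geometric)
    also have "\<dots> = 2 * M * norm y"
      using suminf_geometric[of "1/2::real"] by simp
    finally show ?thesis .
  qed
  ultimately show ?thesis by blast
qed

lemma surj_bounded_linear_lift:
  fixes P :: "'a::banach \<Rightarrow> 'b::banach"
  assumes "bounded_linear P" "surj P"
  obtains C where "C > 0" "\<And>y. \<exists>x. P x = y \<and> norm x \<le> C * norm y"
proof -
  obtain M where "M \<ge> 0" and "\<And>y. \<exists>x. norm x \<le> M * norm y \<and> norm (y - P x) \<le> norm y / 2"
    using surj_linear_approximate_lift[OF bounded_linear.linear[OF assms(1)] assms(2)] by blast
  then obtain f where "\<And>y. norm (f y) \<le> M * norm y" "\<And>y. norm (y - P (f y)) \<le> norm y / 2"
    by metis
  then have "\<exists>x. P x = y \<and> norm x \<le> (2 * M + 1) * norm y" for y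
    using approximate_lift_imp_lift[OF assms(1) \<open>M \<ge> 0\<close>, of f y]
      mult_right_mono[of "2 * M" "2 * M + 1" "norm y"] by force
  moreover have "2 * M + 1 > 0" using \<open>M \<ge> 0\<close> by simp
  ultimately show ?thesis using that by blast
qed

lemma shadowing_factor:
  fixes S :: "'a::banach \<Rightarrow> 'a" and T :: "'b::banach \<Rightarrow> 'b" and P :: "'a \<Rightarrow> 'b"
  assumes P: "bounded_linear P" "surj P" and PS: "P \<circ> S = T \<circ> P" and "shadowing S"
  shows "shadowing T"
proof -
  obtain K where "K > 0" and shadow: "\<forall>w::int \<Rightarrow> 'a. bounded (range w) \<longrightarrow>
      (\<exists>u. (\<forall>n. norm (u n) \<le> K * (SUP m. norm (w m))) \<and> (\<forall>n. u (n + 1) = S (u n) + w n))"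
    using \<open>shadowing S\<close> unfolding shadowing_def by blast
  obtain C where "C > 0" and lift: "\<And>y. \<exists>x. P x = y \<and> norm x \<le> C * norm y"
    using surj_bounded_linear_lift[OF P] by blast
  obtain D where "D > 0" and P_bound: "\<And>x. norm (P x) \<le> norm x * D"
    using bounded_linear.pos_bounded[OF P(1)] by blast
  show ?thesis
    unfolding shadowing_def
  proof (intro exI[of _ "D * K * C"] conjI allI impI)
    show "D * K * C > 0" using \<open>D > 0\<close> \<open>K > 0\<close> \<open>C > 0\<close> by simp
    fix z :: "int \<Rightarrow> 'b"
    assume "bounded (range z)"
    define Z where "Z = (SUP m. norm (z m))"
    have "\<forall>n. \<exists>x. P x = z n \<and> norm x \<le> C * norm (z n)" using lift by blast
    then obtain w where Pw: "\<And>n. P (w n) = z n" and w_bound: "\<And>n. norm (w n) \<le> C * norm (z n)"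
      by (auto dest!: choice)
    have w_le: "norm (w n) \<le> C * Z" for n
    proof -
      have "norm (z n) \<le> Z"
        unfolding Z_def by (rule bounded_norm_le_SUP_norm[OF \<open>bounded (range z)\<close>])
      with w_bound[of n] \<open>C > 0\<close> show ?thesis by (smt (verit) mult_left_mono)
    qed
    then have "bounded (range w)" unfolding bounded_iff by blast
    then obtain u where u_bound: "\<And>n. norm (u n) \<le> K * (SUP m. norm (w m))"
      and u_orbit: "\<And>n. u (n + 1) = S (u n) + w n"
      using shadow by blast
    have "(SUP m. norm (w m)) \<le> C * Z" by (rule cSUP_least) (auto simp: w_le)
    then have u_le: "norm (u n) \<le> K * (C * Z)" for n
      using u_bound[of n] \<open>K > 0\<close> by (smt (verit) mult_left_mono)
    show "\<exists>y. (\<forall>n. norm (y n) \<le> D * K * C * (SUP m. norm (z m))) \<and>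
              (\<forall>n. y (n + 1) = T (y n) + z n)"
    proof (intro exI[of _ "P \<circ> u"] conjI allI)
      fix n
      have "norm (P (u n)) \<le> K * (C * Z) * D"
        using P_bound[of "u n"] u_le[of n] \<open>D > 0\<close> by (smt (verit) mult_right_mono)
      then show "norm ((P \<circ> u) n) \<le> D * K * C * (SUP m. norm (z m))"
        by (simp add: Z_def mult_ac)
      show "(P \<circ> u) (n + 1) = T ((P \<circ> u) n) + z n"
        using fun_cong[OF PS, of "u n"]
        by (simp add: u_orbit linear_add[OF bounded_linear.linear[OF P(1)]] Pw)
    qed
  qed
qed

lemma expansive_doubling:
  assumes "bij S" "linear S" "expansive S"
  shows "\<exists>n. 2 * norm x \<le> norm (ipow S n x)"
proof (cases "x = 0")
  case True
  then show ?thesis by (intro exI[of _ 0]) simp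
next
  case False
  then have "norm (sgn x) = 1" by (simp add: norm_sgn)
  then obtain n where "2 \<le> norm (ipow S n (sgn x))"
    using \<open>expansive S\<close> unfolding expansive_def by blast
  then show ?thesis
    using le_norm_linear_sgn_iff[OF linear_ipow[OF assms(1,2)] False] by blast
qed

lemma expansive_ipow_growth:
  assumes "bij S" "linear S" "expansive S"
  shows "\<exists>n. 2 ^ k * norm x \<le> norm (ipow S n x)"
proof (induction k)
  case 0
  show ?case by (intro exI[of _ 0]) simp
next
  case (Suc k)
  then obtain n where n: "2 ^ k * norm x \<le> norm (ipow S n x)" by blast
  obtain m where "2 * norm (ipow S n x) \<le> norm (ipow S m (ipow S n x))"
    using expansive_doubling[OF assms] by blast
  then have "2 ^ Suc k * norm x \<le> norm (ipow S (m + n) x)"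
    using n by (simp add: ipow_add[OF assms(1)])
  then show ?case by blast
qed

lemma uniformly_expansive_doubling:
  assumes "bij S" "linear S" "uniformly_expansive S"
  obtains n :: nat where "n \<ge> 1"
    "\<And>x. 2 * norm x \<le> norm (ipow S (int n) x) \<or> 2 * norm x \<le> norm (ipow S (- int n) x)"
proof -
  obtain n :: nat where "n \<ge> 1" and unit: "\<And>z. norm z = 1 \<Longrightarrow>
      2 \<le> norm (ipow S (int n) z) \<or> 2 \<le> norm (ipow S (- int n) z)"
    using \<open>uniformly_expansive S\<close> unfolding uniformly_expansive_def by blast
  have "2 * norm x \<le> norm (ipow S (int n) x) \<or> 2 * norm x \<le> norm (ipow S (- int n) x)" for x
  proof (cases "x = 0")
    case False
    then show ?thesis
      using unit[of "sgn x"] le_norm_linear_sgn_iff[OF linear_ipow[OF assms(1,2)] False]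
      by (simp add: norm_sgn)
  qed simp
  with \<open>n \<ge> 1\<close> show ?thesis using that by blast
qed

lemma funpow_doubling_dichotomy:
  fixes A B :: "'a::real_normed_vector \<Rightarrow> 'a"
  assumes "A 0 = 0" and BA: "\<And>w. B (A w) = w"
    and dichotomy: "\<And>w. 2 * norm w \<le> norm (A w) \<or> 2 * norm w \<le> norm (B w)"
  shows "2 * norm z \<le> norm (A z) \<Longrightarrow> 2 ^ j * norm z \<le> norm ((A ^^ j) z)"
proof (induction j arbitrary: z)
  case 0
  then show ?case by simp
next
  case (Suc j)
  \<comment> \<open>\<open>B\<close> shrinks \<open>A z\<close> back to \<open>z\<close>, so by the dichotomy \<open>A\<close> must double \<open>A z\<close>.\<close>
  have "2 * norm (A z) \<le> norm (A (A z))"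
  proof (cases "z = 0")
    case False
    then have "norm z > 0" by simp
    then have "\<not> 2 * norm (A z) \<le> norm (B (A z))"
      unfolding BA using Suc.prems by linarith
    then show ?thesis using dichotomy[of "A z"] by blast
  qed (simp add: \<open>A 0 = 0\<close>)
  then have "2 ^ j * norm (A z) \<le> norm ((A ^^ j) (A z))" by (rule Suc.IH)
  moreover have "2 ^ Suc j * norm z \<le> 2 ^ j * norm (A z)"
    using mult_left_mono[OF Suc.prems, of "2 ^ j"] by (simp add: mult_ac)
  ultimately have "2 ^ Suc j * norm z \<le> norm ((A ^^ j) (A z))" by linarith
  then show ?case by (simp add: funpow_Suc_right del: funpow.simps)
qed

lemma uniformly_expansive_ipow_growth:
  assumes "bij S" "linear S" "uniformly_expansive S"
  obtains n :: nat where "n \<ge> 1" "\<And>j x.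
    2 ^ j * norm x \<le> norm (ipow S (int (n * j)) x) \<or>
    2 ^ j * norm x \<le> norm (ipow S (- int (n * j)) x)"
proof -
  obtain n :: nat where "n \<ge> 1" and doubling: "\<And>x.
      2 * norm x \<le> norm (ipow S (int n) x) \<or> 2 * norm x \<le> norm (ipow S (- int n) x)"
    using uniformly_expansive_doubling[OF assms] by blast
  define A where "A = ipow S (int n)"
  define B where "B = ipow S (- int n)"
  have AB_doubling: "2 * norm w \<le> norm (A w) \<or> 2 * norm w \<le> norm (B w)"
    and BA_doubling: "2 * norm w \<le> norm (B w) \<or> 2 * norm w \<le> norm (A w)" for w
    unfolding A_def B_def using doubling by blast+
  have "A 0 = 0" "B 0 = 0"
    unfolding A_def B_def using linear_0[OF linear_ipow[OF assms(1,2)]] by auto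
  moreover have "B (A w) = w" "A (B w) = w" for w
    unfolding A_def B_def
    using ipow_add[OF assms(1), of "- int n" "int n" w] ipow_add[OF assms(1), of "int n" "- int n" w]
    by simp_all
  ultimately have "2 ^ j * norm x \<le> norm ((A ^^ j) x) \<or> 2 ^ j * norm x \<le> norm ((B ^^ j) x)"
    for j x
    using funpow_doubling_dichotomy[of A B, OF _ _ AB_doubling]
      funpow_doubling_dichotomy[of B A, OF _ _ BA_doubling] AB_doubling[of x] by blast
  moreover have "A ^^ j = ipow S (int (n * j))" "B ^^ j = ipow S (- int (n * j))" for j
    unfolding A_def B_def by (simp_all add: ipow_of_nat ipow_neg_of_nat funpow_mult del: of_nat_mult)
  ultimately show ?thesis using that \<open>n \<ge> 1\<close> by simp
qed

lemma strong_bounded_selector_transfers_growth: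
  assumes "strong_bounded_selector P S T"
  obtains c where "\<And>y. \<exists>x. \<forall>n. c * norm x \<le> norm (ipow S n x) \<longrightarrow> 2 * norm y \<le> norm (ipow T n y)"
proof -
  obtain L where "L \<ge> 1" and sel: "\<forall>y. \<exists>x. P x = y \<and>
      (\<forall>n. norm (ipow S n x) \<le> L * norm (ipow T n y) \<and> norm (ipow T n y) \<le> L * norm (ipow S n x))"
    using assms unfolding strong_bounded_selector_def by blast
  have "\<exists>x. \<forall>n. 2 * L\<^sup>2 * norm x \<le> norm (ipow S n x) \<longrightarrow> 2 * norm y \<le> norm (ipow T n y)" for y
  proof -
    obtain x where up: "\<And>n. norm (ipow S n x) \<le> L * norm (ipow T n y)"
      and down: "\<And>n. norm (ipow T n y) \<le> L * norm (ipow S n x)"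
      using sel by blast
    have "2 * norm y \<le> norm (ipow T n y)" if "2 * L\<^sup>2 * norm x \<le> norm (ipow S n x)" for n
    proof -
      have "L * (2 * norm y) \<le> L * (2 * L * norm x)"
        using down[of 0] \<open>L \<ge> 1\<close> by simp
      also have "\<dots> = 2 * L\<^sup>2 * norm x" by (simp add: power2_eq_square)
      also have "\<dots> \<le> L * norm (ipow T n y)" using that up[of n] by linarith
      finally show ?thesis using \<open>L \<ge> 1\<close> by simp
    qed
    then show ?thesis by blast
  qed
  then show ?thesis using that by blast
qed

lemma expansive_factor:
  assumes "bij S" "linear S" "strong_bounded_selector P S T" "expansive S"
  shows "expansive T"
proof -
  obtain c where transfer:
    "\<And>y. \<exists>x. \<forall>n. c * norm x \<le> norm (ipow S n x) \<longrightarrow> 2 * norm y \<le> norm (ipow T n y)"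
    using strong_bounded_selector_transfers_growth[OF assms(3)] by blast
  obtain k :: nat where "c < 2 ^ k" using real_arch_pow[of 2 c] by auto
  have "\<exists>n. 2 \<le> norm (ipow T n y)" if "norm y = 1" for y
  proof -
    obtain x where x: "\<And>n. c * norm x \<le> norm (ipow S n x) \<Longrightarrow> 2 * norm y \<le> norm (ipow T n y)"
      using transfer by blast
    obtain n where "2 ^ k * norm x \<le> norm (ipow S n x)"
      using expansive_ipow_growth[OF assms(1,2,4)] by blast
    then have "c * norm x \<le> norm (ipow S n x)"
      using \<open>c < 2 ^ k\<close> by (smt (verit) mult_right_mono norm_ge_zero)
    then show ?thesis using x that by force
  qed
  then show ?thesis unfolding expansive_def by blast
qed

lemma uniformly_expansive_factor:
  assumes "bij S" "linear S" "strong_bounded_selector P S T" "uniformly_expansive S"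
  shows "uniformly_expansive T"
proof -
  obtain c where transfer:
    "\<And>y. \<exists>x. \<forall>n. c * norm x \<le> norm (ipow S n x) \<longrightarrow> 2 * norm y \<le> norm (ipow T n y)"
    using strong_bounded_selector_transfers_growth[OF assms(3)] by blast
  obtain n :: nat where "n \<ge> 1" and growth: "\<And>j x.
      2 ^ j * norm x \<le> norm (ipow S (int (n * j)) x) \<or>
      2 ^ j * norm x \<le> norm (ipow S (- int (n * j)) x)"
    using uniformly_expansive_ipow_growth[OF assms(1,2,4)] by blast
  obtain k :: nat where "c < 2 ^ k" using real_arch_pow[of 2 c] by auto
  then have "c < 2 ^ Suc k"
    unfolding power_Suc using zero_less_power[of "2::real" k] by linarith
  have "2 \<le> norm (ipow T (int (n * Suc k)) y) \<or> 2 \<le> norm (ipow T (- int (n * Suc k)) y)"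
    if "norm y = 1" for y
  proof -
    obtain x where x: "\<And>m. c * norm x \<le> norm (ipow S m x) \<Longrightarrow> 2 * norm y \<le> norm (ipow T m y)"
      using transfer by blast
    have "c * norm x \<le> 2 ^ Suc k * norm x"
      using \<open>c < 2 ^ Suc k\<close> by (simp add: mult_right_mono)
    then show ?thesis
      using growth[of "Suc k" x] x that by (smt (verit))
  qed
  moreover have "n * Suc k \<ge> 1" using \<open>n \<ge> 1\<close> by simp
  ultimately show ?thesis unfolding uniformly_expansive_def by blast
qed

theorem lemma3p2:
  fixes S :: "'a::banach \<Rightarrow> 'a" and T :: "'b::banach \<Rightarrow> 'b" and P :: "'a \<Rightarrow> 'b"
  assumes "separable_space (euclidean :: 'a topology)"
    and "separable_space (euclidean :: 'b topology)"
    and "bounded_linear S" and "bij S"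
    and "bounded_linear T" and "bij T"
    and "bounded_linear P" and "surj P"
    and "P \<circ> S = T \<circ> P"
  shows "(shadowing S \<longrightarrow> shadowing T) \<and>
         (strong_bounded_selector P S T \<longrightarrow>
            (expansive S \<longrightarrow> expansive T) \<and>
            (uniformly_expansive S \<longrightarrow> uniformly_expansive T))"
proof -
  have "linear S" using \<open>bounded_linear S\<close> by (rule bounded_linear.linear)
  then show ?thesis
    using shadowing_factor[OF \<open>bounded_linear P\<close> \<open>surj P\<close> \<open>P \<circ> S = T \<circ> P\<close>]
      expansive_factor[OF \<open>bij S\<close>] uniformly_expansive_factor[OF \<open>bij S\<close>]
    by blast
qed

end
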